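(* In any iteration of Algorithm 1, if there exist an integer $m\ge1$ and an index $j\in\{1,\dots,n\}$ such that $i^*=b^m(j)$, then $\mathrm{avg}(j,b(i^* ))<\mathrm{avg}(j,i^* )$.
   Context: Problem (P): given an integer $n\ge1$, reals $0<q_1\le\cdots\le q_n$, $z_1,\dots,z_n>0$ and $K>0$, maximize $\sum_{i=1}^n x_i$ subject to $0\le x_i\le q_i$, $0\le x_1\le\cdots\le x_n$, $\sum_{i=1}^n z_ix_i\le K$. For $1\le i<j\le n+1$ let $\mathrm{sum}(i,j)=z_i+\cdots+z_{j-1}$ and $\mathrm{avg}(i,j)=\mathrm{sum}(i,j)/(j-i)$. Algorithm 1 (run on an instance of (P)): Initialize $S=\{0,n+1\}$, $y_i=\mathrm{avg}(i,n+1)$ and $x_i=0$ for $i=1,\dots,n$, and $\hat B=K$. While $\hat B>0$ and $S\ne\{0,1,\dots,n+1\}$, perform an iteration: let $i^*$ be the index $i\in\{1,\dots,n\}\setminus S$ minimizing $y_i$, ties broken in favour of the smallest index; let $i_L=\max\{j\in S:j<i^*\}$ and $i_R=\min\{j\in S:j>i^*\}$; set $d=\min\{\hat B/((i_R-i^* )y_{i^*}),\ q_{i^*}-x_{i^*}\}$; set $\hat B\leftarrow\hat B-d(i_R-i^* )y_{i^*}$; set $x_i\leftarrow x_i+d$ for all $i^*\le i<i_R$; set $y_i\leftarrow\mathrm{avg}(i,i^* )$ for all $i_L<i<i^*$; add $i^*$ to $S$. Finally output $x_1,\dots,x_n$. Blocker: for $1\le i\le n$, $b(i)$ is the value of $i^*$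 in the last iteration in which $y_i$ is updated (i.e. the last iteration with $i_L<i<i^*$); if $y_i$ is never updated, $b(i)=n+1$. Iterates: $b^0$ is the identity and $b^m(i)=b(b^{m-1}(i))$ (defined as long as $b^{m-1}(i)\le n$). *)

theory Defs
  imports Complex_Main
begin

definition zsum :: "(nat \<Rightarrow> real) \<Rightarrow> nat \<Rightarrow> nat \<Rightarrow> real" where
  "zsum z i j = (\<Sum>k\<in>{i..<j}. z k)"

definition avg :: "(nat \<Rightarrow> real) \<Rightarrow> nat \<Rightarrow> nat \<Rightarrow> real" where
  "avg z i j = zsum z i j / (real j - real i)"

record alg_state =
  stS :: "nat set"
  stY :: "nat \<Rightarrow> real"
  stX :: "nat \<Rightarrow> real"
  stB :: real

definition alg_init :: "nat \<Rightarrow> (nat \<Rightarrow> real) \<Rightarrow> real \<Rightarrow> alg_state" where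
  "alg_init n z K = \<lparr> stS = {0, n+1}, stY = (\<lambda>i. avg z i (n+1)), stX = (\<lambda>i. 0), stB = K \<rparr>"

definition alg_running :: "nat \<Rightarrow> alg_state \<Rightarrow> bool" where
  "alg_running n s \<longleftrightarrow> stB s > 0 \<and> stS s \<noteq> {0..n+1}"

definition istar :: "nat \<Rightarrow> alg_state \<Rightarrow> nat" where
  "istar n s = (LEAST i. i \<in> {1..n} - stS s \<and> (\<forall>k\<in>{1..n} - stS s. stY s i \<le> stY s k))"

definition iLeft :: "nat \<Rightarrow> alg_state \<Rightarrow> nat" where
  "iLeft n s = Max {j\<in>stS s. j < istar n s}"

definition iRight :: "nat \<Rightarrow> alg_state \<Rightarrow> nat" where
  "iRight n s = Min {j\<in>stS s. j > istar n s}"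

definition alg_step :: "nat \<Rightarrow> (nat \<Rightarrow> real) \<Rightarrow> (nat \<Rightarrow> real) \<Rightarrow> alg_state \<Rightarrow> alg_state" where
  "alg_step n q z s =
    (let i = istar n s; iL = iLeft n s; iR = iRight n s;
         d = min (stB s / (real (iR - i) * stY s i)) (q i - stX s i)
     in \<lparr> stS = insert i (stS s),
          stY = (\<lambda>k. if iL < k \<and> k < i then avg z k i else stY s k),
          stX = (\<lambda>k. if i \<le> k \<and> k < iR then stX s k + d else stX s k),
          stB = stB s - d * real (iR - i) * stY s i \<rparr>)"

text \<open>State before iteration k (iterations numbered 0,1,2,...).\<close>
definition alg_st :: "nat \<Rightarrow> (nat \<Rightarrow> real) \<Rightarrow> (nat \<Rightarrow> real) \<Rightarrow> real \<Rightarrow> nat \<Rightarrow> alg_state" where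
  "alg_st n q z K k = (alg_step n q z ^^ k) (alg_init n z K)"

definition performed :: "nat \<Rightarrow> (nat \<Rightarrow> real) \<Rightarrow> (nat \<Rightarrow> real) \<Rightarrow> real \<Rightarrow> nat \<Rightarrow> bool" where
  "performed n q z K k \<longleftrightarrow> (\<forall>l\<le>k. alg_running n (alg_st n q z K l))"

definition upd_iters :: "nat \<Rightarrow> (nat \<Rightarrow> real) \<Rightarrow> (nat \<Rightarrow> real) \<Rightarrow> real \<Rightarrow> nat \<Rightarrow> nat set" where
  "upd_iters n q z K i = {k. performed n q z K k \<and>
      iLeft n (alg_st n q z K k) < i \<and> i < istar n (alg_st n q z K k)}"

definition blocker :: "nat \<Rightarrow> (nat \<Rightarrow> real) \<Rightarrow> (nat \<Rightarrow> real) \<Rightarrow> real \<Rightarrow> nat \<Rightarrow> nat" where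
  "blocker n q z K i =
    (if upd_iters n q z K i = {} then n + 1
     else istar n (alg_st n q z K (Max (upd_iters n q z K i))))"

end

theory Submission
  imports Defs
begin

text \<open>
  Along a run of Algorithm 1 three facts are invariant: for every index i outside S,
  y_i is the average of z over [i, r) where r is the next element of S after i; this r is
  the blocker of i so far; and the values y_(i*) selected so far never decrease.

  Follow the chain j, b(j), ..., b^m(j) = i* backwards. Each b^(l+1)(j) is selected in the
  last iteration updating b^l(j), hence before b^l(j) itself is selected, so all these
  selections happen no earlier than the current iteration k. In the iteration selecting
  b^(l+1)(j) the value of b^l(j) strictly exceeds the selected one (ties go to the smaller
  index), which turns into avg(b^l(j), b^(l+1)(j)) > y_(i*) at iteration k. Concatenating
  the intervals gives avg(j, i*) > y_(i*) = avg(i*, b(i*)), and splitting [j, b(i*)) at i*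
  yields the claim.
\<close>

section \<open>Averages over consecutive intervals\<close>

lemma zsum_concat: "a \<le> b \<Longrightarrow> b \<le> c \<Longrightarrow> zsum z a c = zsum z a b + zsum z b c"
  unfolding zsum_def by (simp add: sum.atLeastLessThan_concat)

lemma avg_concat_convex:
  assumes "a < b" "b < c"
  obtains \<theta> where "0 < \<theta>" "\<theta> < 1" "avg z a c = \<theta> * avg z a b + (1 - \<theta>) * avg z b c"
proof
  let ?\<theta> = "(real b - real a) / (real c - real a)"
  show "0 < ?\<theta>" "?\<theta> < 1" using assms by auto
  have "real b - real a > 0" "real c - real b > 0" "real c - real a > 0"
    using assms by auto
  then show "avg z a c = ?\<theta> * avg z a b + (1 - ?\<theta>) * avg z b c"
    using assms zsum_concat[of a b c z] by (simp add: avg_def divide_simps)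
qed

lemma avg_concat_gt:
  assumes "a < b" "b < c" "v < avg z a b" "v < avg z b c"
  shows "v < avg z a c"
proof -
  obtain \<theta> where \<theta>: "0 < \<theta>" "\<theta> < 1" "avg z a c = \<theta> * avg z a b + (1 - \<theta>) * avg z b c"
    using avg_concat_convex assms(1,2) .
  have "\<theta> * v < \<theta> * avg z a b" "(1 - \<theta>) * v < (1 - \<theta>) * avg z b c"
    using \<theta> assms(3,4) by simp_all
  then show ?thesis using \<theta>(3) by (simp add: algebra_simps)
qed

lemma avg_suffix_le_prefix_if_le_total:
  assumes "a < b" "b < c" "avg z b c \<le> avg z a c"
  shows "avg z b c \<le> avg z a b"
proof -
  obtain \<theta> where \<theta>: "0 < \<theta>" "\<theta> < 1" "avg z a c = \<theta> * avg z a b + (1 - \<theta>) * avg z b c"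
    using avg_concat_convex assms(1,2) .
  then have "avg z a c - avg z b c = \<theta> * (avg z a b - avg z b c)" by (simp add: algebra_simps)
  then have "0 \<le> \<theta> * (avg z a b - avg z b c)" using assms(3) by linarith
  then show ?thesis using \<theta>(1) by (simp add: zero_le_mult_iff)
qed

lemma avg_suffix_less_prefix_if_less_total:
  assumes "a < b" "b < c" "avg z b c < avg z a c"
  shows "avg z b c < avg z a b"
proof -
  obtain \<theta> where \<theta>: "0 < \<theta>" "\<theta> < 1" "avg z a c = \<theta> * avg z a b + (1 - \<theta>) * avg z b c"
    using avg_concat_convex assms(1,2) .
  then have "avg z a c - avg z b c = \<theta> * (avg z a b - avg z b c)" by (simp add: algebra_simps)
  then have "0 < \<theta> * (avg z a b - avg z b c)" using assms(3) by linarith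
  then show ?thesis using \<theta>(1) by (simp add: zero_less_mult_iff)
qed

lemma avg_total_less_prefix:
  assumes "a < b" "b < c" "avg z b c < avg z a b"
  shows "avg z a c < avg z a b"
proof -
  obtain \<theta> where \<theta>: "0 < \<theta>" "\<theta> < 1" "avg z a c = \<theta> * avg z a b + (1 - \<theta>) * avg z b c"
    using avg_concat_convex assms(1,2) .
  have "(1 - \<theta>) * avg z b c < (1 - \<theta>) * avg z a b" using \<theta>(2) assms(3) by simp
  then show ?thesis using \<theta>(3) by (simp add: algebra_simps)
qed

lemma avg_chain_gt:
  fixes a :: "nat \<Rightarrow> nat"
  assumes "0 < m"
    and "\<And>l. l < m \<Longrightarrow> a l < a (Suc l)"
    and "\<And>l. l < m \<Longrightarrow> v < avg z (a l) (a (Suc l))"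
  shows "v < avg z (a 0) (a m)"
proof -
  have "a 0 < a m \<and> v < avg z (a 0) (a m)"
    using assms
  proof (induction m rule: nat_induct_non_zero)
    case 1
    then show ?case by simp
  next
    case (Suc m)
    then show ?case using avg_concat_gt[of "a 0" "a m" "a (Suc m)"] by force
  qed
  then show ?thesis ..
qed

section \<open>A single iteration\<close>

definition next_in :: "nat set \<Rightarrow> nat \<Rightarrow> nat" where
  "next_in S i = Min {x \<in> S. i < x}"

lemma next_in:
  assumes "finite S" "x \<in> S" "i < x"
  shows next_in_mem: "next_in S i \<in> S"
    and next_in_gt: "i < next_in S i"
    and next_in_le: "next_in S i \<le> x"
proof -
  let ?A = "{x \<in> S. i < x}"
  have fin: "finite ?A" and x: "x \<in> ?A" using assms by auto
  then have "Min ?A \<in> ?A" "Min ?A \<le> x" using Min_in[OF fin] Min_le[OF fin] by blast+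
  then show "next_in S i \<in> S" "i < next_in S i" "next_in S i \<le> x"
    unfolding next_in_def by auto
qed

lemma next_in_eqI:
  assumes "finite S" "y \<in> S" "i < y" "\<And>x. x \<in> S \<Longrightarrow> i < x \<Longrightarrow> y \<le> x"
  shows "next_in S i = y"
  unfolding next_in_def using assms by (intro Min_eqI) auto

definition valid_state :: "nat \<Rightarrow> alg_state \<Rightarrow> bool" where
  "valid_state n s \<longleftrightarrow> stS s \<subseteq> {0..n+1} \<and> 0 \<in> stS s \<and> n + 1 \<in> stS s"

lemma stS_alg_step: "stS (alg_step n q z s) = insert (istar n s) (stS s)"
  by (simp add: alg_step_def Let_def)

lemma stY_alg_step:
  "stY (alg_step n q z s) i =
     (if iLeft n s < i \<and> i < istar n s then avg z i (istar n s) else stY s i)"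
  by (simp add: alg_step_def Let_def)

context
  fixes n :: nat and s :: alg_state
  assumes valid: "valid_state n s" and not_full: "stS s \<noteq> {0..n+1}"
begin

lemma finite_stS: "finite (stS s)"
  using valid finite_subset unfolding valid_state_def by blast

lemma istar:
  shows istar_free: "istar n s \<in> {1..n} - stS s"
    and istar_min: "k \<in> {1..n} - stS s \<Longrightarrow> stY s (istar n s) \<le> stY s k"
    and istar_strict_min:
      "k \<in> {1..n} - stS s \<Longrightarrow> k < istar n s \<Longrightarrow> stY s (istar n s) < stY s k"
proof -
  define F where "F = {1..n} - stS s"
  define P where "P i \<longleftrightarrow> i \<in> F \<and> (\<forall>k\<in>F. stY s i \<le> stY s k)" for i
  have "{0..n+1} = insert 0 (insert (n + 1) {1..n})" by auto
  then have "F \<noteq> {}"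
    using valid not_full unfolding valid_state_def F_def by auto
  then have "P (arg_min_on (stY s) F)"
    unfolding P_def F_def using arg_min_if_finite[of F "stY s"] by (auto simp: F_def not_less)
  then have P_istar: "P (istar n s)"
    unfolding istar_def P_def[symmetric] F_def[symmetric] by (rule LeastI)
  then show "istar n s \<in> {1..n} - stS s"
    and "k \<in> {1..n} - stS s \<Longrightarrow> stY s (istar n s) \<le> stY s k"
    unfolding P_def F_def by auto
  assume k: "k \<in> {1..n} - stS s" "k < istar n s"
  from k(2) have "\<not> P k"
    unfolding istar_def P_def[symmetric] F_def[symmetric] by (rule not_less_Least)
  then show "stY s (istar n s) < stY s k"
    using P_istar k unfolding P_def F_def by force
qed

lemma iLeft:
  shows iLeft_mem: "iLeft n s \<in> stS s"
    and iLeft_less: "iLeft n s < istar n s"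
    and iLeft_ge: "x \<in> stS s \<Longrightarrow> x < istar n s \<Longrightarrow> x \<le> iLeft n s"
proof -
  let ?A = "{j \<in> stS s. j < istar n s}"
  have fin: "finite ?A" and "0 \<in> ?A"
    using finite_stS valid istar_free unfolding valid_state_def by auto
  then have "Max ?A \<in> ?A" using Max_in[OF fin] by blast
  then show "iLeft n s \<in> stS s" "iLeft n s < istar n s"
    unfolding iLeft_def by auto
  show "x \<in> stS s \<Longrightarrow> x < istar n s \<Longrightarrow> x \<le> iLeft n s"
    unfolding iLeft_def using fin by auto
qed

lemma iRight_eq_next_in: "iRight n s = next_in (stS s) (istar n s)"
  unfolding iRight_def next_in_def ..

lemma iRight_gt: "istar n s < iRight n s"
  unfolding iRight_eq_next_in
  using next_in_gt[OF finite_stS, of "n + 1"] valid istar_free unfolding valid_state_def by auto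

lemma between_iLeft_istar_free:
  "iLeft n s < i \<Longrightarrow> i < istar n s \<Longrightarrow> i \<in> {1..n} - stS s"
  using istar_free iLeft_ge[of i] by fastforce

lemma next_in_eq_iRight:
  assumes "iLeft n s < i" "i < istar n s"
  shows "next_in (stS s) i = iRight n s"
proof (rule next_in_eqI[OF finite_stS])
  have "n + 1 \<in> stS s" "istar n s < n + 1"
    using valid istar_free unfolding valid_state_def by auto
  then show "iRight n s \<in> stS s"
    unfolding iRight_eq_next_in by (rule next_in_mem[OF finite_stS])
  show "i < iRight n s" using assms(2) iRight_gt by simp
  fix x assume x: "x \<in> stS s" "i < x"
  then have "istar n s < x"
    using iLeft_ge[of x] istar_free assms(1) by (cases "x = istar n s") fastforce+
  then show "iRight n s \<le> x"
    unfolding iRight_eq_next_in by (rule next_in_le[OF finite_stS x(1)])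
qed

lemma next_in_alg_step:
  assumes "i \<in> {1..n} - stS s" "i \<noteq> istar n s"
  shows "next_in (insert (istar n s) (stS s)) i =
           (if iLeft n s < i \<and> i < istar n s then istar n s else next_in (stS s) i)"
proof -
  have fin: "finite (insert (istar n s) (stS s))" using finite_stS by simp
  have top: "n + 1 \<in> stS s" "i < n + 1" using valid assms unfolding valid_state_def by auto
  show ?thesis
  proof (cases "iLeft n s < i \<and> i < istar n s")
    case True
    then show ?thesis using iLeft_ge by (intro next_in_eqI[OF fin]) force+
  next
    case False
    have "i < iLeft n s" if "i < istar n s"
      using False that assms iLeft_mem by (cases "i = iLeft n s") auto
    then have "next_in (stS s) i \<le> istar n s" if "i < istar n s"
      using that iLeft_mem iLeft_less next_in_le[OF finite_stS iLeft_mem] by fastforce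
    then show ?thesis
      using False next_in[OF finite_stS top] next_in_le[OF finite_stS]
      by (intro next_in_eqI[OF fin]) (auto simp: not_less)
  qed
qed

lemma valid_state_alg_step: "valid_state n (alg_step n q z s)"
  using valid istar_free unfolding valid_state_def stS_alg_step by auto

end

section \<open>Runs of the algorithm\<close>

locale alg_run =
  fixes n :: nat and q z :: "nat \<Rightarrow> real" and K :: real
begin

abbreviation st :: "nat \<Rightarrow> alg_state" where
  "st t \<equiv> alg_st n q z K t"

abbreviation updates :: "nat \<Rightarrow> nat \<Rightarrow> bool" where
  "updates t i \<equiv> iLeft n (st t) < i \<and> i < istar n (st t)"

definition reached :: "nat \<Rightarrow> bool" where
  "reached t \<longleftrightarrow> (\<forall>l<t. alg_running n (st l))"

definition blocker_before :: "nat \<Rightarrow> nat \<Rightarrow> nat" where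
  "blocker_before t i =
    (if {u. u < t \<and> updates u i} = {} then n + 1
     else istar n (st (Max {u. u < t \<and> updates u i})))"

definition ymin :: "nat \<Rightarrow> real" where
  "ymin t = stY (st t) (istar n (st t))"

definition run_inv :: "nat \<Rightarrow> bool" where
  "run_inv t \<longleftrightarrow> valid_state n (st t) \<and>
     (\<forall>i \<in> {1..n} - stS (st t).
        stY (st t) i = avg z i (next_in (stS (st t)) i) \<and>
        next_in (stS (st t)) i = blocker_before t i \<and>
        (\<forall>u<t. ymin u \<le> stY (st t) i))"

lemma st_Suc: "st (Suc t) = alg_step n q z (st t)"
  by (simp add: alg_st_def)

lemma reached_Suc: "reached (Suc t) \<longleftrightarrow> reached t \<and> alg_running n (st t)"
  unfolding reached_def using less_Suc_eq by auto

lemma blocker_before_Suc: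
  "blocker_before (Suc t) i = (if updates t i then istar n (st t) else blocker_before t i)"
proof (cases "updates t i")
  case True
  then have "Max {u. u < Suc t \<and> updates u i} = t" by (intro Max_eqI) auto
  then show ?thesis using True unfolding blocker_before_def by auto
next
  case False
  then have "{u. u < Suc t \<and> updates u i} = {u. u < t \<and> updates u i}"
    by (auto simp: less_Suc_eq)
  then show ?thesis unfolding blocker_before_def if_not_P[OF False] by (simp only:)
qed

lemma run_inv_0: "run_inv 0"
proof -
  have S0: "stS (st 0) = {0, n + 1}" and Y0: "stY (st 0) = (\<lambda>i. avg z i (n + 1))"
    by (simp_all add: alg_st_def alg_init_def)
  have "next_in (stS (st 0)) i = n + 1" if "i \<in> {1..n}" for i
    using that unfolding S0 by (intro next_in_eqI) auto
  moreover have "blocker_before 0 i = n + 1" for i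
    unfolding blocker_before_def by simp
  ultimately show ?thesis unfolding run_inv_def valid_state_def S0 Y0 by simp
qed

text \<open>Since y_(i*) <= y_i, i.e. avg(i*, i_R) <= avg(i, i_R), splitting [i, i_R) at i* shows
  that the new value avg(i, i*) is at least avg(i*, i_R) = y_(i*); this is why the selected
  values never decrease.\<close>

lemma ymin_le_updated_y:
  assumes inv: "run_inv t" and run: "alg_running n (st t)" and upd: "updates t i"
  shows "ymin t \<le> avg z i (istar n (st t))"
proof -
  have valid: "valid_state n (st t)" using inv unfolding run_inv_def by simp
  have not_full: "stS (st t) \<noteq> {0..n+1}" using run unfolding alg_running_def by simp
  have y_eq: "stY (st t) i' = avg z i' (next_in (stS (st t)) i')"
    if "i' \<in> {1..n} - stS (st t)" for i'
    using inv that unfolding run_inv_def by blast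
  have i: "i \<in> {1..n} - stS (st t)"
    using between_iLeft_istar_free[OF valid not_full] upd by blast
  have y_i: "stY (st t) i = avg z i (iRight n (st t))"
    using y_eq[OF i] next_in_eq_iRight[OF valid not_full] upd by simp
  have ymin_t: "ymin t = avg z (istar n (st t)) (iRight n (st t))"
    using y_eq[OF istar_free[OF valid not_full]]
    unfolding ymin_def iRight_eq_next_in[OF valid not_full] .
  have "ymin t \<le> stY (st t) i"
    using istar_min[OF valid not_full i] unfolding ymin_def .
  then show ?thesis
    using avg_suffix_le_prefix_if_le_total[OF upd[THEN conjunct2] iRight_gt[OF valid not_full]]
      y_i ymin_t
    by simp
qed

lemma run_inv_Suc:
  assumes inv: "run_inv t" and run: "alg_running n (st t)"
  shows "run_inv (Suc t)"
proof -
  have valid: "valid_state n (st t)" using inv unfolding run_inv_def by simp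
  have not_full: "stS (st t) \<noteq> {0..n+1}" using run unfolding alg_running_def by simp
  have inv_free: "stY (st t) i = avg z i (next_in (stS (st t)) i)"
    "next_in (stS (st t)) i = blocker_before t i" "\<forall>u<t. ymin u \<le> stY (st t) i"
    if "i \<in> {1..n} - stS (st t)" for i
    using inv that unfolding run_inv_def by blast+
  show ?thesis
    unfolding run_inv_def
  proof (intro conjI ballI)
    show "valid_state n (st (Suc t))"
      unfolding st_Suc by (rule valid_state_alg_step[OF valid not_full])
    fix i assume "i \<in> {1..n} - stS (st (Suc t))"
    then have i: "i \<in> {1..n} - stS (st t)" "i \<noteq> istar n (st t)"
      unfolding st_Suc stS_alg_step by auto
    have next_Suc: "next_in (stS (st (Suc t))) i =
        (if updates t i then istar n (st t) else next_in (stS (st t)) i)"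
      unfolding st_Suc stS_alg_step by (rule next_in_alg_step[OF valid not_full i])
    have y_Suc: "stY (st (Suc t)) i =
        (if updates t i then avg z i (istar n (st t)) else stY (st t) i)"
      unfolding st_Suc by (rule stY_alg_step)
    show "stY (st (Suc t)) i = avg z i (next_in (stS (st (Suc t))) i)"
      using next_Suc y_Suc inv_free(1)[OF i(1)] by simp
    show "next_in (stS (st (Suc t))) i = blocker_before (Suc t) i"
      using next_Suc blocker_before_Suc inv_free(2)[OF i(1)] by simp
    have "ymin t \<le> stY (st (Suc t)) i"
      using y_Suc ymin_le_updated_y[OF inv run] istar_min[OF valid not_full i(1)]
      unfolding ymin_def by auto
    moreover have "ymin u \<le> ymin t" if "u < t" for u
      using inv_free(3)[OF istar_free[OF valid not_full]] that unfolding ymin_def by simp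
    ultimately show "\<forall>u<Suc t. ymin u \<le> stY (st (Suc t)) i"
      by (metis less_SucE order_trans)
  qed
qed

lemma run_inv: "reached t \<Longrightarrow> run_inv t"
  by (induction t) (auto simp: reached_Suc run_inv_0 run_inv_Suc)

lemma
  assumes "reached t" "i \<in> {1..n} - stS (st t)"
  shows y_eq_avg_next_in: "stY (st t) i = avg z i (next_in (stS (st t)) i)"
    and next_in_eq_blocker_before: "next_in (stS (st t)) i = blocker_before t i"
    and ymin_le_y: "u < t \<Longrightarrow> ymin u \<le> stY (st t) i"
  using run_inv[OF assms(1)] assms(2) unfolding run_inv_def by blast+

lemma performed_iff: "performed n q z K t \<longleftrightarrow> reached t \<and> alg_running n (st t)"
  unfolding performed_def reached_def by (auto simp: le_less)

context
  fixes t :: nat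
  assumes perf: "performed n q z K t"
begin

lemma performed_reached: "reached t"
  using perf unfolding performed_iff by blast

lemma performed_valid: "valid_state n (st t)"
  using run_inv[OF performed_reached] unfolding run_inv_def by blast

lemma performed_not_full: "stS (st t) \<noteq> {0..n+1}"
  using perf unfolding performed_iff alg_running_def by blast

lemma performed_istar_free: "istar n (st t) \<in> {1..n} - stS (st t)"
  by (rule istar_free[OF performed_valid performed_not_full])

lemma updates_free: "updates t i \<Longrightarrow> i \<in> {1..n} - stS (st t)"
  using between_iLeft_istar_free[OF performed_valid performed_not_full] by blast

lemma ymin_eq_avg_iRight: "ymin t = avg z (istar n (st t)) (iRight n (st t))"
  unfolding ymin_def iRight_eq_next_in[OF performed_valid performed_not_full]
  by (rule y_eq_avg_next_in[OF performed_reached performed_istar_free])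

lemma ymin_mono: "u \<le> t \<Longrightarrow> ymin u \<le> ymin t"
  using ymin_le_y[OF performed_reached performed_istar_free, of u]
  by (cases "u = t") (simp_all add: ymin_def[of t])

end

lemma stS_mono: "t \<le> t' \<Longrightarrow> stS (st t) \<subseteq> stS (st t')"
  by (induction t' rule: dec_induct) (auto simp: st_Suc stS_alg_step)

lemma istar_mem_later: "t < t' \<Longrightarrow> istar n (st t) \<in> stS (st t')"
  using stS_mono[of "Suc t" t'] by (auto simp: st_Suc stS_alg_step)

lemma istar_inj:
  assumes "performed n q z K t" "performed n q z K t'" "istar n (st t) = istar n (st t')"
  shows "t = t'"
proof (rule ccontr)
  assume "t \<noteq> t'"
  then have "istar n (st t) \<in> stS (st t') \<or> istar n (st t') \<in> stS (st t)"
    using istar_mem_later by (meson linorder_neqE_nat)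
  then show False
    using assms(3) performed_istar_free[OF assms(1)] performed_istar_free[OF assms(2)] by auto
qed

lemma finite_upd_iters: "finite (upd_iters n q z K i)"
proof -
  have "inj_on (\<lambda>t. istar n (st t)) {t. performed n q z K t}"
    using istar_inj by (auto intro: inj_onI)
  moreover have "(\<lambda>t. istar n (st t)) ` {t. performed n q z K t} \<subseteq> {1..n}"
    using performed_istar_free by auto
  ultimately have "finite {t. performed n q z K t}"
    by (rule inj_on_finite) simp
  then show ?thesis
    unfolding upd_iters_def by (rule rev_finite_subset) auto
qed

lemma blocker_gt: "i \<le> n \<Longrightarrow> i < blocker n q z K i"
  using finite_upd_iters[of i] Max_in[of "upd_iters n q z K i"]
  unfolding blocker_def upd_iters_def by auto

lemma blocker_eq_next_in:
  assumes "reached t" "i \<in> {1..n} - stS (st t)"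
    and "\<And>u. performed n q z K u \<Longrightarrow> t \<le> u \<Longrightarrow> \<not> updates u i"
  shows "blocker n q z K i = next_in (stS (st t)) i"
proof -
  have "u \<in> upd_iters n q z K i \<longleftrightarrow> u < t \<and> updates u i" for u
  proof
    assume "u \<in> upd_iters n q z K i"
    then show "u < t \<and> updates u i"
      using assms(3) unfolding upd_iters_def by (auto simp: not_le[symmetric])
  next
    assume u: "u < t \<and> updates u i"
    then have "performed n q z K u"
      using assms(1) unfolding reached_def performed_def by auto
    then show "u \<in> upd_iters n q z K i" using u unfolding upd_iters_def by simp
  qed
  then have "upd_iters n q z K i = {u. u < t \<and> updates u i}" by blast
  then have "blocker n q z K i = blocker_before t i"
    unfolding blocker_def blocker_before_def by (simp only:)
  then show ?thesis using next_in_eq_blocker_before[OF assms(1,2)] by simp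
qed

lemma blocker_istar_eq_iRight:
  assumes "performed n q z K k"
  shows "blocker n q z K (istar n (st k)) = iRight n (st k)"
proof -
  have "\<not> updates u (istar n (st k))" if "performed n q z K u" "k \<le> u" for u
  proof (cases "u = k")
    case False
    then have "istar n (st k) \<in> stS (st u)" using istar_mem_later that(2) by simp
    then show ?thesis using updates_free[OF that(1)] by blast
  qed simp
  then have "blocker n q z K (istar n (st k)) = next_in (stS (st k)) (istar n (st k))"
    by (intro blocker_eq_next_in performed_reached performed_istar_free assms)
  then show ?thesis
    using iRight_eq_next_in[OF performed_valid[OF assms] performed_not_full[OF assms]] by simp
qed

definition last_update :: "nat \<Rightarrow> nat" where
  "last_update i = Max (upd_iters n q z K i)"

context
  fixes j :: nat
  assumes bounded: "blocker n q z K j \<le> n"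
begin

lemma last_update_mem: "last_update j \<in> upd_iters n q z K j"
proof -
  have "upd_iters n q z K j \<noteq> {}"
    using bounded unfolding blocker_def by (auto split: if_splits)
  then show ?thesis unfolding last_update_def using finite_upd_iters Max_in by blast
qed

lemma performed_last_update: "performed n q z K (last_update j)"
  using last_update_mem unfolding upd_iters_def by blast

lemma updates_last_update: "updates (last_update j) j"
  using last_update_mem unfolding upd_iters_def by blast

lemma istar_last_update: "istar n (st (last_update j)) = blocker n q z K j"
  using last_update_mem unfolding blocker_def last_update_def by auto

text \<open>Strict because j < i* and ties are broken towards the smaller index.\<close>

lemma ymin_last_update_less: "ymin (last_update j) < avg z j (blocker n q z K j)"
proof -
  let ?u = "last_update j"
  note perf = performed_last_update and upd = updates_last_update
  note valid = performed_valid[OF perf] and not_full = performed_not_full[OF perf]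
  have j_free: "j \<in> {1..n} - stS (st ?u)" by (rule updates_free[OF perf upd])
  have "stY (st ?u) (istar n (st ?u)) < stY (st ?u) j"
    using istar_strict_min[OF valid not_full j_free] upd by blast
  moreover have "stY (st ?u) j = avg z j (iRight n (st ?u))"
    using y_eq_avg_next_in[OF performed_reached[OF perf] j_free]
      next_in_eq_iRight[OF valid not_full] upd by simp
  ultimately have "avg z (istar n (st ?u)) (iRight n (st ?u)) < avg z j (iRight n (st ?u))"
    using ymin_eq_avg_iRight[OF perf] unfolding ymin_def by simp
  then show ?thesis
    using avg_suffix_less_prefix_if_less_total[OF upd[THEN conjunct2] iRight_gt[OF valid not_full]]
      ymin_eq_avg_iRight[OF perf] istar_last_update
    by simp
qed

lemma last_update_less_selected:
  assumes "performed n q z K \<tau>" "istar n (st \<tau>) = j"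
  shows "last_update j < \<tau>"
proof -
  have "\<tau> \<noteq> last_update j" using assms updates_last_update by auto
  moreover have "j \<notin> stS (st (last_update j))"
    using updates_free[OF performed_last_update updates_last_update] by blast
  then have "\<not> \<tau> < last_update j" using istar_mem_later assms(2) by auto
  ultimately show ?thesis by simp
qed

end

lemma blocker_funpow_less:
  assumes "\<forall>l\<le>m. (blocker n q z K ^^ l) j \<le> n" "l < m"
  shows "(blocker n q z K ^^ l) j < (blocker n q z K ^^ Suc l) j"
  using assms blocker_gt by simp

lemma blocker_funpow_ge:
  assumes "\<forall>l\<le>m. (blocker n q z K ^^ l) j \<le> n" "l \<le> m"
  shows "j \<le> (blocker n q z K ^^ l) j"
  using assms(2)
proof (induction l)
  case (Suc l)
  then show ?case using blocker_funpow_less[OF assms(1), of l] by simp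
qed simp

lemma selected_no_earlier:
  assumes k: "performed n q z K k" and istar_k: "istar n (st k) = (blocker n q z K ^^ m) j"
    and bounded: "\<forall>l\<le>m. (blocker n q z K ^^ l) j \<le> n"
    and l: "0 < l" "l \<le> m"
    and \<tau>: "performed n q z K \<tau>" "istar n (st \<tau>) = (blocker n q z K ^^ l) j"
  shows "k \<le> \<tau>"
  using l(2,1) \<tau>
proof (induction l arbitrary: \<tau> rule: inc_induct)
  case base
  then show ?case using istar_inj[OF k, of \<tau>] istar_k by simp
next
  case (step l)
  let ?b = "\<lambda>l. (blocker n q z K ^^ l) j"
  have next_bounded: "blocker n q z K (?b l) \<le> n"
    using bounded[rule_format, of "Suc l"] step.hyps by simp
  have "k \<le> last_update (?b l)"
    using step.IH performed_last_update[OF next_bounded] istar_last_update[OF next_bounded]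
    by simp
  moreover have "last_update (?b l) < \<tau>"
    using last_update_less_selected[OF next_bounded] step.prems(2,3) .
  ultimately show ?case by simp
qed

lemma avg_blocker_of_istar_less:
  assumes k: "performed n q z K k" and m: "0 < m"
    and chain: "\<forall>l<m. (blocker n q z K ^^ l) j \<le> n"
    and istar_k: "istar n (st k) = (blocker n q z K ^^ m) j"
  shows "avg z j (blocker n q z K (istar n (st k))) < avg z j (istar n (st k))"
proof -
  let ?b = "\<lambda>l. (blocker n q z K ^^ l) j"
  have bounded: "\<forall>l\<le>m. ?b l \<le> n"
    using chain istar_k performed_istar_free[OF k] by (auto simp: le_less)
  note less = blocker_funpow_less[OF bounded] and ge = blocker_funpow_ge[OF bounded]
  have "ymin k < avg z (?b l) (?b (Suc l))" if l: "l < m" for l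
  proof -
    have next_bounded: "blocker n q z K (?b l) \<le> n"
      using bounded[rule_format, of "Suc l"] l by simp
    have selected: "istar n (st (last_update (?b l))) = ?b (Suc l)"
      using istar_last_update[OF next_bounded] by simp
    have "k \<le> last_update (?b l)"
      using selected_no_earlier[OF k istar_k bounded _ _
          performed_last_update[OF next_bounded] selected] l
      by simp
    then have "ymin k \<le> ymin (last_update (?b l))"
      by (rule ymin_mono[OF performed_last_update[OF next_bounded]])
    then show ?thesis using ymin_last_update_less[OF next_bounded] by simp
  qed
  then have "ymin k < avg z j (istar n (st k))"
    using avg_chain_gt[of m ?b, OF m less] istar_k by simp
  moreover have "j < istar n (st k)"
    using ge[of "m - 1"] less[of "m - 1"] m istar_k by simp
  ultimately show ?thesis
    using avg_total_less_prefix iRight_gt[OF performed_valid[OF k] performed_not_full[OF k]]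
      ymin_eq_avg_iRight[OF k] blocker_istar_eq_iRight[OF k]
    by simp
qed

end

text \<open>Only the hypotheses on the run and on the chain of blockers are used: the order in which
  indices are selected and the y-values do not depend on q or K, and nothing in the argument
  needs z to be positive or j to lie in {1..n}.\<close>

theorem corollary1:
  fixes n :: nat and q z :: "nat \<Rightarrow> real" and K :: real and k m j :: nat
  assumes "n \<ge> 1"
    and "0 < q 1"
    and "\<And>i. 1 \<le> i \<Longrightarrow> i < n \<Longrightarrow> q i \<le> q (i + 1)"
    and "\<And>i. 1 \<le> i \<Longrightarrow> i \<le> n \<Longrightarrow> z i > 0"
    and "K > 0"
    and "performed n q z K k"
    and "m \<ge> 1"
    and "j \<in> {1..n}"
    and "\<forall>l<m. (blocker n q z K ^^ l) j \<le> n"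
    and "istar n (alg_st n q z K k) = (blocker n q z K ^^ m) j"
  shows "avg z j (blocker n q z K (istar n (alg_st n q z K k)))
           < avg z j (istar n (alg_st n q z K k))"
  using alg_run.avg_blocker_of_istar_less assms(6,7,9,10) by simp

end
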